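(* Let $a,b,c\in\mathbb{Z}_8$. The unary operation $f(x)=ax^3+bx^2+cx$ on $\mathbb{Z}_8$ preserves the relation $Z$ if and only if both $a$ and $b$ are even.
   Context: $P_4$ is the power set of $\{1,2,3,4\}$. For $A\in P_4$, $\mathbf{g}^A\in\mathbb{Z}_8^{P_4}$ is the tuple with $B$-component $1$ if $A\subseteq B$ and $0$ otherwise. Every $\mathbf{u}\in\mathbb{Z}_8^{P_4}$ has a unique expression $\mathbf{u}=\sum_{A\in P_4}a_A\mathbf{g}^A$ with $a_A\in\mathbb{Z}_8$. $Z\subseteq \mathbb{Z}_8^{P_4}$ consists of all $\mathbf{u}$ whose coefficients satisfy: (Z1) $a_{\{2\}}\equiv 2a_{\{1\}}\pmod 4$ and $a_{\{4\}}\equiv 2a_{\{3\}}\pmod 4$; (Z2) $a_A\equiv 0\pmod 2$ whenever $|A|\ge 2$; (Z3) $a_A\equiv 0\pmod 4$ whenever $|A|\ge 2$ and $A\cap\{2,4\}\neq\emptyset$; (Z4) $a_A=0$ whenever $\{2,4\}\subseteq A$. An operation preserves $Z$ if applying it componentwise to elements of $Z$ yields an element of $Z$. *)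

theory Defs
  imports Main "HOL-Library.Numeral_Type" "HOL-Number_Theory.Cong"
begin

text \<open>Z_8 is the numeral type 8 (integers modulo 8, a commutative ring).
  zrep x is the canonical representative of x in {0..7}.\<close>

definition zrep :: "8 \<Rightarrow> int" where
  "zrep x = Rep_bit0 x"

definition P4 :: "nat set set" where
  "P4 = Pow {1,2,3,4}"

text \<open>Tuples in Z_8^{P_4} are functions nat set => 8 that vanish outside P_4.
  g A is the tuple with B-component 1 iff A is a subset of B.\<close>
definition g :: "nat set \<Rightarrow> nat set \<Rightarrow> 8" where
  "g A = (\<lambda>B. if B \<in> P4 \<and> A \<subseteq> B then 1 else 0)"

definition lincomb :: "(nat set \<Rightarrow> 8) \<Rightarrow> nat set \<Rightarrow> 8" where
  "lincomb a = (\<lambda>B. \<Sum>A\<in>P4. a A * g A B)"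

definition coeff_ok :: "(nat set \<Rightarrow> 8) \<Rightarrow> bool" where
  "coeff_ok a \<longleftrightarrow>
     [zrep (a {2}) = 2 * zrep (a {1})] (mod 4) \<and>
     [zrep (a {4}) = 2 * zrep (a {3})] (mod 4) \<and>
     (\<forall>A\<in>P4. card A \<ge> 2 \<longrightarrow> [zrep (a A) = 0] (mod 2)) \<and>
     (\<forall>A\<in>P4. card A \<ge> 2 \<and> A \<inter> {2,4} \<noteq> {} \<longrightarrow> [zrep (a A) = 0] (mod 4)) \<and>
     (\<forall>A\<in>P4. {2,4} \<subseteq> A \<longrightarrow> a A = 0)"

text \<open>Z: tuples whose (unique) coefficient expression satisfies Z1-Z4.\<close>
definition Z :: "(nat set \<Rightarrow> 8) set" where
  "Z = {u. \<exists>a. u = lincomb a \<and> coeff_ok a}"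

definition apply1 :: "(8 \<Rightarrow> 8) \<Rightarrow> (nat set \<Rightarrow> 8) \<Rightarrow> nat set \<Rightarrow> 8" where
  "apply1 f u = (\<lambda>B. if B \<in> P4 then f (u B) else 0)"

definition preserves_Z :: "(8 \<Rightarrow> 8) \<Rightarrow> bool" where
  "preserves_Z f \<longleftrightarrow> (\<forall>u\<in>Z. apply1 f u \<in> Z)"

end

theory Submission
  imports Defs "HOL-Library.Function_Algebras"
begin

(*
  Write tuples as u = sum_A a_A g^A. Since g^A g^A' = g^(A Un A'), pointwise products of
  tuples correspond to convolution of coefficient vectors along unions. Z is closed under
  addition and scaling, and (Z1)-(Z3) make every coefficient indexed by a set meeting {2,4}
  even; a product of two such coefficients is killed by a further factor 2, which is what
  (Z4) needs. Counting factors of 2 in the same way gives 2uv, 2uvw in Z for all u, v, w in Z,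
  so f(u) = a'(2u^3) + b'(2u^2) + cu lies in Z when a = 2a' and b = 2b'.

  Conversely, (Z1) and (Z3) at {1,2} say that the second differences
  u{2} - 2u{1} + u{} and u{1,2} - u{1} - u{2} + u{} are divisible by 4. The tuple
  g^{1} + 2g^{2} of Z takes the values 0, 1, 2, 3 on {}, {1}, {2}, {1,2}; for its image
  under f these differences are 6a + 2b and 18a + 4b, which forces a and b to be even.
*)

lemma exhaust_8:
  fixes x :: 8
  obtains "x = 0" | "x = 1" | "x = 2" | "x = 3" | "x = 4" | "x = 5" | "x = 6" | "x = 7"
proof (cases x)
  case (of_int z)
  then have "z \<in> {0..7}" by simp
  then have "z = 0 \<or> z = 1 \<or> z = 2 \<or> z = 3 \<or> z = 4 \<or> z = 5 \<or> z = 6 \<or> z = 7" by auto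
  with of_int that show ?thesis by auto
qed

lemma dvd_8_iff: "(d::8) dvd y \<longleftrightarrow> (\<exists>k\<in>{0,1,2,3,4,5,6,7}. y = d * k)"
proof -
  have "k \<in> {0,1,2,3,4,5,6,7}" for k :: 8
    by (cases k rule: exhaust_8) simp_all
  then show ?thesis
    unfolding dvd_def by blast
qed

lemmas zrep_simps = zrep_def bit0.Rep_numeral bit0.Rep_0 bit0.Rep_1 cong_def dvd_8_iff

lemma cong_zrep_0_mod_2_iff: "[zrep x = 0] (mod 2) \<longleftrightarrow> (2::8) dvd x"
  by (cases x rule: exhaust_8) (simp_all add: zrep_simps)

lemma cong_zrep_0_mod_4_iff: "[zrep x = 0] (mod 4) \<longleftrightarrow> (4::8) dvd x"
  by (cases x rule: exhaust_8) (simp_all add: zrep_simps)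

lemma cong_zrep_double_mod_4_iff: "[zrep y = 2 * zrep x] (mod 4) \<longleftrightarrow> (4::8) dvd y - 2 * x"
  by (cases x rule: exhaust_8; cases y rule: exhaust_8) (simp_all add: zrep_simps)

lemma even_zrep_iff: "even (zrep x) \<longleftrightarrow> (2::8) dvd x"
  by (cases x rule: exhaust_8) (simp_all add: zrep_simps)

lemma eight_eq_0: "(8::8) = 0"
  by simp

lemma dvd_4_double_iff: "(4::8) dvd 2 * x \<longleftrightarrow> 2 dvd x"
  by (cases x rule: exhaust_8) (simp_all add: dvd_8_iff)

lemma double_eq_0_iff: "2 * (x::8) = 0 \<longleftrightarrow> 4 dvd x"
  by (cases x rule: exhaust_8) (simp_all add: dvd_8_iff)

lemma mult_eq_0_if_dvd_4_dvd_2: "(4::8) dvd x \<Longrightarrow> 2 dvd y \<Longrightarrow> x * y = 0"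
  by (elim dvdE) (simp add: mult.assoc mult.left_commute[of _ 2] eight_eq_0)

lemma coeff_ok_iff:
  "coeff_ok p \<longleftrightarrow>
     4 dvd p {2} - 2 * p {1} \<and> 4 dvd p {4} - 2 * p {3} \<and>
     (\<forall>A\<in>P4. 2 \<le> card A \<longrightarrow> 2 dvd p A) \<and>
     (\<forall>A\<in>P4. 2 \<le> card A \<and> A \<inter> {2,4} \<noteq> {} \<longrightarrow> 4 dvd p A) \<and>
     (\<forall>A\<in>P4. {2,4} \<subseteq> A \<longrightarrow> p A = 0)"
  unfolding coeff_ok_def cong_zrep_0_mod_2_iff cong_zrep_0_mod_4_iff cong_zrep_double_mod_4_iff ..

lemma coeff_ok_add:
  assumes "coeff_ok p" "coeff_ok q"
  shows "coeff_ok (p + q)"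
proof -
  have Z1: "4 dvd (p + q) {m} - 2 * (p + q) {n}"
    if "4 dvd p {m} - 2 * p {n}" "4 dvd q {m} - 2 * q {n}" for m n :: nat
    using dvd_add[OF that] by (simp add: algebra_simps)
  show ?thesis
    using assms unfolding coeff_ok_iff
    by (intro conjI Z1 ballI impI) (auto intro: dvd_add)
qed

lemma coeff_ok_scale:
  assumes "coeff_ok p"
  shows "coeff_ok (\<lambda>A. k * p A)"
proof -
  have Z1: "4 dvd k * p {m} - 2 * (k * p {n})" if "4 dvd p {m} - 2 * p {n}" for m n :: nat
    using dvd_mult[OF that, of k] by (simp add: algebra_simps)
  show ?thesis
    using assms unfolding coeff_ok_iff
    by (intro conjI Z1 ballI impI) auto
qed

lemma card_ge_2_or_singleton:
  assumes "finite A" "x \<in> A"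
  shows "2 \<le> card A \<or> A = {x}"
proof (cases "2 \<le> card A")
  case False
  moreover have "card A \<noteq> 0"
    using assms by auto
  ultimately have "card A = 1"
    by linarith
  then obtain y where "A = {y}"
    by (rule card_1_singletonE)
  with assms(2) show ?thesis
    by simp
qed simp

lemma P4_meets_cases:
  assumes "A \<in> P4" "A \<inter> {2,4} \<noteq> {}"
  obtains "2 \<le> card A" | "A = {2}" | "A = {4}"
proof -
  from assms(2) obtain x where x: "x \<in> A" "x = 2 \<or> x = 4"
    by blast
  have "finite A"
    using assms(1) finite_subset[of A "{1,2,3,4}"] by (simp add: P4_def)
  from card_ge_2_or_singleton[OF this x(1)] x(2) that show thesis
    by blast
qed

lemma dvd_2_if_dvd_4: "(4::8) dvd x \<Longrightarrow> 2 dvd x"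
  by (cases x rule: exhaust_8) (simp_all add: dvd_8_iff)

lemma coeff_ok_dvd_2_if_meets:
  assumes p: "coeff_ok p" and A: "A \<in> P4" "A \<inter> {2,4} \<noteq> {}"
  shows "2 dvd p A"
proof -
  have singleton: "2 dvd p {m}" if "4 dvd p {m} - 2 * p {n}" for m n :: nat
  proof -
    have "(2::8) dvd p {m} - 2 * p {n} + 2 * p {n}"
      using dvd_2_if_dvd_4[OF that] by (intro dvd_add) simp_all
    then show ?thesis by simp
  qed
  from A show ?thesis
  proof (cases rule: P4_meets_cases)
    case 1
    with p A show ?thesis by (auto simp: coeff_ok_iff intro: dvd_2_if_dvd_4)
  qed (use p singleton in \<open>auto simp: coeff_ok_iff\<close>)
qed

lemma coeff_ok_dvd_4_if_meets_even:
  assumes p: "coeff_ok p" and even: "\<forall>A\<in>P4. 2 dvd p A" and A: "A \<in> P4" "A \<inter> {2,4} \<noteq> {}"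
  shows "4 dvd p A"
proof -
  have singleton: "4 dvd p {m}" if "4 dvd p {m} - 2 * p {n}" "{n} \<in> P4" for m n :: nat
  proof -
    have "(4::8) dvd p {m} - 2 * p {n} + 2 * p {n}"
      using that even by (intro dvd_add) (auto simp: dvd_4_double_iff)
    then show ?thesis by simp
  qed
  from A show ?thesis
  proof (cases rule: P4_meets_cases)
    case 1
    with p A show ?thesis by (auto simp: coeff_ok_iff)
  qed (use p singleton in \<open>auto simp: coeff_ok_iff P4_def\<close>)
qed

lemma finite_P4: "finite P4"
  by (simp add: P4_def)

lemma lincomb_eq_sum_Pow:
  assumes B: "B \<in> P4"
  shows "lincomb p B = (\<Sum>A\<in>Pow B. p A)"
proof -
  have "lincomb p B = (\<Sum>A\<in>P4. if A \<subseteq> B then p A else 0)"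
    unfolding lincomb_def g_def using B by (intro sum.cong) auto
  also have "\<dots> = (\<Sum>A\<in>{A\<in>P4. A \<subseteq> B}. p A)"
    by (simp add: sum.inter_filter finite_P4)
  also have "{A\<in>P4. A \<subseteq> B} = Pow B"
    using B by (auto simp: P4_def)
  finally show ?thesis .
qed

lemma lincomb_outside_P4: "B \<notin> P4 \<Longrightarrow> lincomb p B = 0"
  unfolding lincomb_def g_def by simp

lemma lincomb_add: "lincomb (p + q) = lincomb p + lincomb q"
  unfolding lincomb_def by (simp add: fun_eq_iff sum.distrib distrib_right)

lemma lincomb_scale: "lincomb (\<lambda>A. k * p A) = (\<lambda>B. k * lincomb p B)"
  unfolding lincomb_def by (simp add: fun_eq_iff sum_distrib_left mult.assoc)

definition union_conv :: "(nat set \<Rightarrow> 8) \<Rightarrow> (nat set \<Rightarrow> 8) \<Rightarrow> nat set \<Rightarrow> 8" where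
  "union_conv p q D = (\<Sum>A\<in>P4. \<Sum>A'\<in>P4. if A \<union> A' = D then p A * q A' else 0)"

lemma Un_in_P4: "A \<in> P4 \<Longrightarrow> A' \<in> P4 \<Longrightarrow> A \<union> A' \<in> P4"
  by (simp add: P4_def)

lemma g_mult: "g A B * g A' B = g (A \<union> A') B"
  unfolding g_def by simp

lemma lincomb_union_conv: "lincomb (union_conv p q) = lincomb p * lincomb q"
proof
  fix B
  have "lincomb (union_conv p q) B =
      (\<Sum>D\<in>P4. \<Sum>A\<in>P4. \<Sum>A'\<in>P4. if A \<union> A' = D then p A * q A' * g D B else 0)"
    unfolding lincomb_def union_conv_def sum_distrib_right by (intro sum.cong refl) simp
  also have "\<dots> =
      (\<Sum>A\<in>P4. \<Sum>A'\<in>P4. \<Sum>D\<in>P4. if A \<union> A' = D then p A * q A' * g D B else 0)"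
    by (subst sum.swap) (rule sum.cong[OF refl sum.swap])
  also have "\<dots> = (\<Sum>A\<in>P4. \<Sum>A'\<in>P4. p A * q A' * g (A \<union> A') B)"
    by (intro sum.cong refl) (simp add: sum.delta'[OF finite_P4] Un_in_P4)
  also have "\<dots> = lincomb p B * lincomb q B"
    unfolding lincomb_def sum_product g_mult[symmetric] by (simp add: ac_simps)
  finally show "lincomb (union_conv p q) B = (lincomb p * lincomb q) B"
    by simp
qed

lemma union_conv_dvd:
  assumes "\<And>A A'. A \<in> P4 \<Longrightarrow> A' \<in> P4 \<Longrightarrow> A \<union> A' = D \<Longrightarrow> d dvd p A * q A'"
  shows "d dvd union_conv p q D"
  unfolding union_conv_def using assms by (auto intro!: dvd_sum)

lemma coeff_ok_double_union_conv:
  assumes p: "coeff_ok p" and q: "coeff_ok q"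
  shows "coeff_ok (\<lambda>D. 2 * union_conv p q D)"
proof -
  have meets: "2 dvd union_conv p q D" if "D \<inter> {2,4} \<noteq> {}" for D
  proof (rule union_conv_dvd)
    fix A A' assume A: "A \<in> P4" "A' \<in> P4" "A \<union> A' = D"
    with that consider "A \<inter> {2,4} \<noteq> {}" | "A' \<inter> {2,4} \<noteq> {}"
      by blast
    then show "2 dvd p A * q A'"
      by cases (use A coeff_ok_dvd_2_if_meets[OF p] coeff_ok_dvd_2_if_meets[OF q] in auto)
  qed
  have contains: "4 dvd union_conv p q D" if "{2,4} \<subseteq> D" for D
  proof (rule union_conv_dvd)
    fix A A' assume A: "A \<in> P4" "A' \<in> P4" "A \<union> A' = D"
    show "4 dvd p A * q A'"
    proof (cases "{2,4} \<subseteq> A \<or> {2,4} \<subseteq> A'")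
      case True
      with A p q show ?thesis by (auto simp: coeff_ok_iff)
    next
      case False
      with A that have "A \<inter> {2,4} \<noteq> {}" "A' \<inter> {2,4} \<noteq> {}" by blast+
      with A have "2 dvd p A" "2 dvd q A'"
        using coeff_ok_dvd_2_if_meets[OF p] coeff_ok_dvd_2_if_meets[OF q] by auto
      then show ?thesis using mult_dvd_mono by fastforce
    qed
  qed
  show ?thesis
    unfolding coeff_ok_iff
    using meets contains by (auto simp: dvd_4_double_iff double_eq_0_iff intro!: dvd_diff)
qed

lemma coeff_ok_union_conv_even:
  assumes p: "coeff_ok p" and p_even: "\<forall>A\<in>P4. 2 dvd p A" and q: "coeff_ok q"
  shows "coeff_ok (union_conv p q)"
proof -
  have even: "2 dvd union_conv p q D" for D
    by (rule union_conv_dvd) (use p_even in auto)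
  have meets: "4 dvd union_conv p q D" if "D \<inter> {2,4} \<noteq> {}" for D
  proof (rule union_conv_dvd)
    fix A A' assume A: "A \<in> P4" "A' \<in> P4" "A \<union> A' = D"
    with that consider "A \<inter> {2,4} \<noteq> {}" | "A' \<inter> {2,4} \<noteq> {}" by blast
    then show "4 dvd p A * q A'"
    proof cases
      case 1
      with A show ?thesis using coeff_ok_dvd_4_if_meets_even[OF p p_even] by auto
    next
      case 2
      with A have "2 dvd p A" "2 dvd q A'"
        using p_even coeff_ok_dvd_2_if_meets[OF q] by auto
      then show ?thesis using mult_dvd_mono by fastforce
    qed
  qed
  have contains: "union_conv p q D = 0" if "{2,4} \<subseteq> D" for D
  proof -
    \<comment> \<open>\<open>0 dvd x\<close> means \<open>x = 0\<close>, so vanishing is a divisibility statement too\<close>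
    have "0 dvd union_conv p q D"
    proof (rule union_conv_dvd)
      fix A A' assume A: "A \<in> P4" "A' \<in> P4" "A \<union> A' = D"
      show "0 dvd p A * q A'"
      proof (cases "{2,4} \<subseteq> A \<or> {2,4} \<subseteq> A'")
        case True
        with A p q show ?thesis by (auto simp: coeff_ok_iff)
      next
        case False
        with A that have "A \<inter> {2,4} \<noteq> {}" "A' \<inter> {2,4} \<noteq> {}" by blast+
        with A have "4 dvd p A" "2 dvd q A'"
          using coeff_ok_dvd_4_if_meets_even[OF p p_even] coeff_ok_dvd_2_if_meets[OF q] by auto
        then show ?thesis by (simp add: mult_eq_0_if_dvd_4_dvd_2)
      qed
    qed
    then show ?thesis by simp
  qed
  show ?thesis
    unfolding coeff_ok_iff
    using even meets contains by (auto simp: dvd_4_double_iff intro!: dvd_diff)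
qed

lemma lincomb_in_Z: "coeff_ok p \<Longrightarrow> lincomb p \<in> Z"
  unfolding Z_def by blast

lemma ZE:
  assumes "u \<in> Z"
  obtains p where "u = lincomb p" "coeff_ok p"
  using assms unfolding Z_def by blast

lemma Z_add:
  assumes "u \<in> Z" "v \<in> Z"
  shows "u + v \<in> Z"
proof -
  from assms obtain p q where "u = lincomb p" "v = lincomb q" "coeff_ok p" "coeff_ok q"
    by (elim ZE)
  then show ?thesis
    by (simp add: lincomb_add[symmetric] lincomb_in_Z coeff_ok_add)
qed

lemma Z_scale:
  assumes "u \<in> Z"
  shows "(\<lambda>B. k * u B) \<in> Z"
proof -
  from assms obtain p where "u = lincomb p" "coeff_ok p"
    by (rule ZE)
  then show ?thesis
    by (simp add: lincomb_scale[symmetric] lincomb_in_Z coeff_ok_scale)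
qed

lemma Z_double_mult:
  assumes "u \<in> Z" "v \<in> Z"
  shows "2 * u * v \<in> Z"
proof -
  from assms obtain p q where "u = lincomb p" "v = lincomb q" "coeff_ok p" "coeff_ok q"
    by (elim ZE)
  moreover from this have "2 * u * v = lincomb (\<lambda>D. 2 * union_conv p q D)"
    by (simp add: lincomb_scale lincomb_union_conv fun_eq_iff mult.assoc)
  ultimately show ?thesis
    by (simp add: lincomb_in_Z coeff_ok_double_union_conv)
qed

lemma Z_double_mult_mult:
  assumes "u \<in> Z" "v \<in> Z" "w \<in> Z"
  shows "2 * u * v * w \<in> Z"
proof -
  from assms obtain p q r where "u = lincomb p" "v = lincomb q" "w = lincomb r"
    and ok: "coeff_ok p" "coeff_ok q" "coeff_ok r"
    by (elim ZE)
  then have "2 * u * v * w = lincomb (union_conv (\<lambda>D. 2 * union_conv p q D) r)"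
    by (simp add: lincomb_scale lincomb_union_conv fun_eq_iff mult.assoc)
  moreover have "coeff_ok (union_conv (\<lambda>D. 2 * union_conv p q D) r)"
    using ok by (intro coeff_ok_union_conv_even coeff_ok_double_union_conv) auto
  ultimately show ?thesis
    by (simp add: lincomb_in_Z)
qed

lemma apply1_eq_comp:
  assumes "u \<in> Z" "f 0 = 0"
  shows "apply1 f u = f \<circ> u"
proof -
  from assms(1) obtain p where "u = lincomb p"
    by (rule ZE)
  with assms(2) show ?thesis
    by (auto simp: apply1_def fun_eq_iff lincomb_outside_P4)
qed

lemma preserves_Z_if_even:
  fixes a b c :: 8
  assumes "2 dvd a" "2 dvd b"
  shows "preserves_Z (\<lambda>x. a * x ^ 3 + b * x ^ 2 + c * x)"
  unfolding preserves_Z_def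
proof
  fix u assume u: "u \<in> Z"
  obtain a' b' where "a = 2 * a'" "b = 2 * b'"
    using assms by blast
  then have "apply1 (\<lambda>x. a * x ^ 3 + b * x ^ 2 + c * x) u =
      (\<lambda>B. a' * (2 * u * u * u) B) + (\<lambda>B. b' * (2 * u * u) B) + (\<lambda>B. c * u B)"
    by (simp add: apply1_eq_comp[OF u] fun_eq_iff power3_eq_cube power2_eq_square ac_simps)
  also have "\<dots> \<in> Z"
    using u by (intro Z_add Z_scale Z_double_mult Z_double_mult_mult)
  finally show "apply1 (\<lambda>x. a * x ^ 3 + b * x ^ 2 + c * x) u \<in> Z" .
qed

lemma Z_second_differences:
  assumes "u \<in> Z"
  shows "4 dvd u {2} - 2 * u {1} + u {}" and "4 dvd u {1,2} - u {1} - u {2} + u {}"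
proof -
  from assms obtain p where u: "u = lincomb p" and p: "coeff_ok p"
    by (rule ZE)
  have "u {2} - 2 * u {1} + u {} = p {2} - 2 * p {1}"
    by (simp add: u lincomb_eq_sum_Pow P4_def Pow_insert algebra_simps)
  with p show "4 dvd u {2} - 2 * u {1} + u {}"
    by (simp add: coeff_ok_iff)
  have "u {1,2} - u {1} - u {2} + u {} = p {1,2}"
    by (simp add: u lincomb_eq_sum_Pow P4_def Pow_insert algebra_simps)
  moreover have "{1,2} \<in> P4" "card {1::nat,2} = 2"
    by (simp_all add: P4_def)
  ultimately show "4 dvd u {1,2} - u {1} - u {2} + u {}"
    using p unfolding coeff_ok_iff by auto
qed

lemma ex_Z_values_0123: "\<exists>u\<in>Z. u {} = 0 \<and> u {1} = 1 \<and> u {2} = 2 \<and> u {1,2} = 3"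
proof
  define p :: "nat set \<Rightarrow> 8" where "p A = (if A = {1} then 1 else if A = {2} then 2 else 0)" for A
  have "coeff_ok p"
    unfolding coeff_ok_iff p_def by auto
  then show "lincomb p \<in> Z"
    by (rule lincomb_in_Z)
  show "lincomb p {} = 0 \<and> lincomb p {1} = 1 \<and> lincomb p {2} = 2 \<and> lincomb p {1,2} = 3"
    by (simp add: lincomb_eq_sum_Pow P4_def Pow_insert p_def)
qed

lemma even_if_preserves_Z:
  fixes a b c :: 8
  assumes "preserves_Z (\<lambda>x. a * x ^ 3 + b * x ^ 2 + c * x)" (is "preserves_Z ?f")
  shows "2 dvd a \<and> 2 dvd b"
proof -
  obtain u where u: "u \<in> Z" and u_values: "u {} = 0" "u {1} = 1" "u {2} = 2" "u {1,2} = 3"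
    using ex_Z_values_0123 by blast
  have "?f \<circ> u \<in> Z"
    using assms u apply1_eq_comp[OF u] unfolding preserves_Z_def by auto
  from Z_second_differences[OF this]
  have "4 dvd ?f 2 - 2 * ?f 1 + ?f 0" "4 dvd ?f 3 - ?f 1 - ?f 2 + ?f 0"
    unfolding comp_apply u_values .
  moreover have "?f 2 - 2 * ?f 1 + ?f 0 = 6 * a + 2 * b" "?f 3 - ?f 1 - ?f 2 + ?f 0 = 18 * a + 4 * b"
    by (simp_all add: algebra_simps)
  ultimately have "4 dvd 6 * a + 2 * b" "4 dvd 18 * a + 4 * b"
    by simp_all
  then show ?thesis
    by (cases a rule: exhaust_8; cases b rule: exhaust_8) (simp_all add: dvd_8_iff)
qed

theorem lemma3p7:
  fixes a b c :: 8
  shows "preserves_Z (\<lambda>x. a * x ^ 3 + b * x ^ 2 + c * x) \<longleftrightarrow>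
         even (zrep a) \<and> even (zrep b)"
  unfolding even_zrep_iff using even_if_preserves_Z preserves_Z_if_even by blast

end
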